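(* Let $B$ be an associative ring with unit, let $n\geq 3$, and let $\phi$ be a homogeneous quasi-homomorphism on $\Gamma=EL_n(B)$. Then: (1) $\phi(s)=0$ for every elementary matrix $s\in\Gamma$; (2) $\phi(h)=0$ for every $h\in U_nB\cup L_nB$.
   Context: An elementary matrix in $M_n(B)$ is a matrix whose diagonal entries are $1$ and all of whose off-diagonal entries except at most one are $0$; $EL_n(B)$ is the group generated by all elementary matrices. $U_nB$ (resp. $L_nB$) denotes the group of unit upper (resp. lower) triangular matrices in $EL_n(B)$, i.e. those with all diagonal entries $1$ and all entries below (resp. above) the diagonal equal to $0$. A quasi-homomorphism on a group $\Gamma$ is a function $\phi\colon\Gamma\to\mathbb{R}$ with $\sup_{g,h\in\Gamma}|\phi(gh)-\phi(g)-\phi(h)|<\infty$; it is homogeneous if $\phi(g^m)=m\,\phi(g)$ for all $g\in\Gamma$ and $m\in\mathbb{Z}$. *)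

theory Defs
  imports "HOL-Analysis.Analysis"
begin

text \<open>Square matrices over a unital (not necessarily commutative) ring 'a, indexed by a
finite linearly ordered type 'n (so n = CARD('n)); entry (i,j) is A $ i $ j.\<close>

definition elementary_mat :: "'a::ring_1 ^('n::{finite,linorder}) ^'n::{finite,linorder} \<Rightarrow> bool" where
  "elementary_mat s \<longleftrightarrow> (\<forall>i. s $ i $ i = 1) \<and>
     (\<forall>i j k l. i \<noteq> j \<and> k \<noteq> l \<and> s $ i $ j \<noteq> 0 \<and> s $ k $ l \<noteq> 0 \<longrightarrow> (i, j) = (k, l))"

inductive_set EL :: "('a::ring_1 ^('n::{finite,linorder}) ^'n::{finite,linorder}) set" where
  EL_gen: "elementary_mat s \<Longrightarrow> s \<in> EL"
| EL_one: "mat 1 \<in> EL"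
| EL_mult: "x \<in> EL \<Longrightarrow> y \<in> EL \<Longrightarrow> x ** y \<in> EL"
| EL_inv: "x \<in> EL \<Longrightarrow> x ** y = mat 1 \<Longrightarrow> y ** x = mat 1 \<Longrightarrow> y \<in> EL"

definition mat_inv2 :: "'a::ring_1 ^('n::finite) ^'n::finite \<Rightarrow> 'a ^'n ^'n" where
  "mat_inv2 g = (SOME h. g ** h = mat 1 \<and> h ** g = mat 1)"

fun mat_npow :: "'a::ring_1 ^('n::finite) ^'n::finite \<Rightarrow> nat \<Rightarrow> 'a ^'n ^'n" where
  "mat_npow g 0 = mat 1"
| "mat_npow g (Suc k) = g ** mat_npow g k"

definition mat_ipow :: "'a::ring_1 ^('n::finite) ^'n::finite \<Rightarrow> int \<Rightarrow> 'a ^'n ^'n" where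
  "mat_ipow g m = (if 0 \<le> m then mat_npow g (nat m) else mat_npow (mat_inv2 g) (nat (- m)))"

definition quasi_hom_on :: "'g set \<Rightarrow> ('g \<Rightarrow> 'g \<Rightarrow> 'g) \<Rightarrow> ('g \<Rightarrow> real) \<Rightarrow> bool" where
  "quasi_hom_on G f \<phi> \<longleftrightarrow> (\<exists>C. \<forall>g\<in>G. \<forall>h\<in>G. \<bar>\<phi> (f g h) - \<phi> g - \<phi> h\<bar> \<le> C)"

definition homogeneous_EL :: "('a::ring_1 ^('n::{finite,linorder}) ^'n::{finite,linorder} \<Rightarrow> real) \<Rightarrow> bool" where
  "homogeneous_EL \<phi> \<longleftrightarrow> (\<forall>g\<in>EL. \<forall>m::int. \<phi> (mat_ipow g m) = of_int m * \<phi> g)"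

definition upper_unitri :: "('a::ring_1 ^('n::{finite,linorder}) ^'n::{finite,linorder}) set" where
  "upper_unitri = {h \<in> EL. (\<forall>i. h $ i $ i = 1) \<and> (\<forall>i j. j < i \<longrightarrow> h $ i $ j = 0)}"

definition lower_unitri :: "('a::ring_1 ^('n::{finite,linorder}) ^'n::{finite,linorder}) set" where
  "lower_unitri = {h \<in> EL. (\<forall>i. h $ i $ i = 1) \<and> (\<forall>i j. i < j \<longrightarrow> h $ i $ j = 0)}"

end

theory Submission
  imports Defs
begin

text \<open>
  Let \<open>C\<close> be the defect of \<open>\<phi>\<close>. Then \<open>|\<phi>(g\<^sub>1 \<cdots> g\<^sub>k)| \<le> kC\<close> whenever the values \<open>\<phi>(g\<^sub>i)\<close> sum to
  zero, while homogeneity gives \<open>\<phi>(g\<^sup>m) = m \<phi>(g)\<close>; so \<open>\<phi>(g) = 0\<close> as soon as all powers of \<open>g\<close> are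
  products of a bounded number of such factors. For \<open>n \<ge> 3\<close> the power \<open>E\<^sub>i\<^sub>j(b)\<^sup>m = E\<^sub>i\<^sub>j(mb)\<close> of a
  transvection is the commutator \<open>[E\<^sub>i\<^sub>k(mb), E\<^sub>k\<^sub>j(1)]\<close>, four factors whose values cancel.
  Powers of a unitriangular matrix are unitriangular, and a unitriangular matrix is a product of at
  most \<open>n\<^sup>2\<close> transvections, each of which now has value \<open>0\<close>.
\<close>

definition transvection :: "'n::finite \<Rightarrow> 'n \<Rightarrow> 'a::ring_1 \<Rightarrow> 'a^'n^'n" where
  "transvection i j x = (\<chi> a b. (if a = b then 1 else 0) + (if a = i \<and> b = j then x else 0))"

lemma transvection_nth [simp]:
  "transvection i j x $ a $ b = (if a = b then 1 else 0) + (if a = i \<and> b = j then x else 0)"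
  by (simp add: transvection_def)

lemma mat_one_nth: "(mat 1 :: 'a::ring_1^'n::finite^'n) $ a $ b = (if a = b then 1 else 0)"
  by (simp add: mat_def)

lemma transvection_mult_nth:
  "(transvection i j x ** M) $ a $ b = M $ a $ b + (if a = i then x * M $ j $ b else 0)"
  by (simp add: transvection_def matrix_matrix_mult_def distrib_right sum.distrib
      if_distrib[of "\<lambda>y. y * _"] cong: if_cong)

lemma transvection_zero: "transvection i j 0 = mat 1"
  by (simp add: vec_eq_iff mat_one_nth)

lemma transvection_add:
  "i \<noteq> j \<Longrightarrow> transvection i j x ** transvection i j y = transvection i j (x + y)"
  by (simp add: vec_eq_iff transvection_mult_nth)

lemma transvection_commutator:
  assumes "i \<noteq> j" "i \<noteq> k" "j \<noteq> k"
  shows "transvection i k x ** (transvection k j y **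
           (transvection i k (- x) ** transvection k j (- y))) = transvection i j (x * y)"
  using assms by (simp add: vec_eq_iff transvection_mult_nth algebra_simps)

lemma mat_npow_transvection:
  assumes "i \<noteq> j"
  shows "mat_npow (transvection i j x) m = transvection i j (of_nat m * x)"
  by (induction m) (simp_all add: transvection_zero transvection_add assms distrib_right)

definition transvections :: "('a::ring_1^'n::finite^'n) set" where
  "transvections = {transvection i j c | i j c. i \<noteq> j}"

lemma elementary_mat_transvection: "i \<noteq> j \<Longrightarrow> elementary_mat (transvection i j x)"
  by (simp add: elementary_mat_def)

lemma transvection_in_EL: "i \<noteq> j \<Longrightarrow> transvection i j x \<in> EL"
  by (intro EL_gen elementary_mat_transvection)

lemma transvections_subset_EL: "transvections \<subseteq> EL"
  by (auto simp: transvections_def transvection_in_EL)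

lemma elementary_mat_cases:
  assumes "elementary_mat s"
  obtains "s = mat 1" | i j x where "i \<noteq> j" "s = transvection i j x"
proof -
  have diag: "s $ a $ a = 1" for a
    using assms by (simp add: elementary_mat_def)
  have unique: "(a, b) = (i, j)"
    if "a \<noteq> b" "s $ a $ b \<noteq> 0" "i \<noteq> j" "s $ i $ j \<noteq> 0" for a b i j
    using assms that unfolding elementary_mat_def by blast
  show thesis
  proof (cases "\<exists>i j. i \<noteq> j \<and> s $ i $ j \<noteq> 0")
    case True
    then obtain i j where ij: "i \<noteq> j" "s $ i $ j \<noteq> 0" by blast
    have "s $ a $ b = transvection i j (s $ i $ j) $ a $ b" for a b
    proof -
      consider "a = b" | "(a, b) = (i, j)" | "a \<noteq> b" "s $ a $ b = 0" "(a, b) \<noteq> (i, j)"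
        using unique[OF _ _ ij] by blast
      then show ?thesis
        by cases (use diag ij(1) in auto)
    qed
    then have "s = transvection i j (s $ i $ j)" unfolding vec_eq_iff by blast
    with ij that show ?thesis by blast
  next
    case False
    then have "s $ a $ b = mat 1 $ a $ b" for a b
      using diag by (cases "a = b") (auto simp: mat_one_nth)
    then have "s = mat 1" unfolding vec_eq_iff by blast
    with that show ?thesis by blast
  qed
qed

lemma mat_inv2_eqI:
  assumes "g ** h = mat 1" "h ** g = mat 1"
  shows "mat_inv2 g = h"
proof -
  have inv: "g ** mat_inv2 g = mat 1 \<and> mat_inv2 g ** g = mat 1"
    unfolding mat_inv2_def by (rule someI[of _ h]) (use assms in blast)
  have "mat_inv2 g = mat_inv2 g ** (g ** h)"
    using assms by simp
  also have "\<dots> = h"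
    using inv by (simp add: matrix_mul_assoc)
  finally show ?thesis .
qed

definition mat_prod_list :: "('a::ring_1^'n::finite^'n) list \<Rightarrow> 'a^'n^'n" where
  "mat_prod_list xs = foldr (**) xs (mat 1)"

lemma mat_prod_list_Nil [simp]: "mat_prod_list [] = mat 1"
  and mat_prod_list_Cons [simp]: "mat_prod_list (x # xs) = x ** mat_prod_list xs"
  by (simp_all add: mat_prod_list_def)

lemma mat_prod_list_in_EL: "set xs \<subseteq> EL \<Longrightarrow> mat_prod_list xs \<in> EL"
  by (induction xs) (auto intro: EL_one EL_mult)

lemma finite_strict_order_has_maximal:
  assumes "finite S" "S \<noteq> {}" "transp R" "irreflp R"
  shows "\<exists>m\<in>S. \<forall>y\<in>S. \<not> R m y"
  using assms(1,2)
proof (induction S rule: finite_ne_induct)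
  case (singleton x)
  then show ?case using assms(4) by (simp add: irreflp_def)
next
  case (insert x S)
  then obtain m where m: "m \<in> S" "\<forall>y\<in>S. \<not> R m y" by blast
  show ?case
  proof (cases "R m x")
    case True
    have "\<not> R x y" if "y \<in> insert x S" for y
      using that m True assms(3,4) by (auto simp: irreflp_def dest: transpD)
    then show ?thesis by blast
  next
    case False
    then show ?thesis using m by blast
  qed
qed

text \<open>\<open>R\<close> is a strict order on the indices: \<open>(<)\<close> gives upper and \<open>(>)\<close> lower unitriangular matrices.\<close>

definition unitriangular :: "('n \<Rightarrow> 'n \<Rightarrow> bool) \<Rightarrow> 'a::ring_1^'n::finite^'n \<Rightarrow> bool" where
  "unitriangular R M \<longleftrightarrow> (\<forall>i. M $ i $ i = 1) \<and> (\<forall>i j. i \<noteq> j \<and> M $ i $ j \<noteq> 0 \<longrightarrow> R i j)"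

lemma unitriangular_mat_one: "unitriangular R (mat 1)"
  by (simp add: unitriangular_def mat_one_nth)

lemma unitriangular_mult:
  assumes R: "transp R" "irreflp R" and A: "unitriangular R A" and B: "unitriangular R B"
  shows "unitriangular R (A ** B)"
proof -
  have path: "(a = k \<or> R a k) \<and> (k = b \<or> R k b)" if "A $ a $ k * B $ k $ b \<noteq> 0" for a k b
    using that A B unfolding unitriangular_def by (metis mult_zero_left mult_zero_right)
  have off_diag: "(A ** B) $ a $ b = 0" if "a \<noteq> b" "\<not> R a b" for a b
    unfolding matrix_matrix_mult_def
    using path[of a _ b] that R(1) by (auto intro!: sum.neutral dest: transpD)
  have diag: "(A ** B) $ a $ a = 1" for a
  proof -
    have "(A ** B) $ a $ a = A $ a $ a * B $ a $ a + (\<Sum>k\<in>UNIV - {a}. A $ a $ k * B $ k $ a)"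
      by (simp add: matrix_matrix_mult_def sum.remove)
    also have "(\<Sum>k\<in>UNIV - {a}. A $ a $ k * B $ k $ a) = 0"
      using path[of a _ a] R by (auto intro!: sum.neutral simp: irreflp_def dest: transpD)
    finally show ?thesis using A B by (simp add: unitriangular_def)
  qed
  show ?thesis
    unfolding unitriangular_def using off_diag diag by blast
qed

lemma unitriangular_npow:
  "transp R \<Longrightarrow> irreflp R \<Longrightarrow> unitriangular R h \<Longrightarrow> unitriangular R (mat_npow h m)"
  by (induction m) (simp_all add: unitriangular_mat_one unitriangular_mult)

lemma upper_unitri_unitriangular:
  assumes "h \<in> upper_unitri"
  shows "unitriangular (<) h"
proof -
  have "i < j" if "i \<noteq> j" "h $ i $ j \<noteq> 0" for i j
    using assms that by (cases i j rule: linorder_cases) (auto simp: upper_unitri_def)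
  with assms show ?thesis
    by (simp add: upper_unitri_def unitriangular_def)
qed

lemma lower_unitri_unitriangular:
  assumes "h \<in> lower_unitri"
  shows "unitriangular (>) h"
proof -
  have "j < i" if "i \<noteq> j" "h $ i $ j \<noteq> 0" for i j
    using assms that by (cases i j rule: linorder_cases) (auto simp: lower_unitri_def)
  with assms show ?thesis
    by (simp add: lower_unitri_def unitriangular_def)
qed

definition offdiag_support :: "'a::ring_1^'n::finite^'n \<Rightarrow> ('n \<times> 'n) set" where
  "offdiag_support M = {(i, j). i \<noteq> j \<and> M $ i $ j \<noteq> 0}"

lemma unitriangular_transvection_factorization:
  assumes R: "transp R" "irreflp R" and "unitriangular R M"
  shows "\<exists>xs. M = mat_prod_list xs \<and> length xs \<le> card (offdiag_support M) \<and> set xs \<subseteq> transvections"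
  using assms(3)
proof (induction "card (offdiag_support M)" arbitrary: M rule: less_induct)
  case less
  then have diag: "M $ a $ a = 1" and tri: "a \<noteq> b \<Longrightarrow> M $ a $ b \<noteq> 0 \<Longrightarrow> R a b" for a b
    by (auto simp: unitriangular_def)
  show ?case
  proof (cases "offdiag_support M = {}")
    case True
    then have "M $ a $ b = mat 1 $ a $ b" for a b
      using diag by (cases "a = b") (auto simp: offdiag_support_def mat_one_nth)
    then have "M = mat 1" unfolding vec_eq_iff by blast
    then show ?thesis by (intro exI[of _ "[]"]) simp
  next
    case False
    then obtain j where j: "j \<in> snd ` offdiag_support M" and j_max: "\<forall>k\<in>snd ` offdiag_support M. \<not> R j k"
      using finite_strict_order_has_maximal[OF _ _ R] by (metis finite image_is_empty)
    then obtain i where ij: "(i, j) \<in> offdiag_support M" by force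
    then have "i \<noteq> j" by (simp add: offdiag_support_def)
    txt \<open>As \<open>j\<close> is maximal among the columns of the support, row \<open>j\<close> is that of the identity;
      hence left multiplication by \<open>E\<^sub>i\<^sub>j(M\<^sub>i\<^sub>j)\<close> only restores entry \<open>(i, j)\<close>.\<close>
    have row_j: "M $ j $ b = (if j = b then 1 else 0)" for b
      using tri[of j b] j_max diag by (force simp: offdiag_support_def)
    define M' where "M' = (\<chi> a b. if (a, b) = (i, j) then 0 else M $ a $ b)"
    have tri': "unitriangular R M'"
      using less.prems \<open>i \<noteq> j\<close> by (auto simp: unitriangular_def M'_def)
    have "offdiag_support M' = offdiag_support M - {(i, j)}"
      by (auto simp: offdiag_support_def M'_def)
    then have smaller: "card (offdiag_support M') < card (offdiag_support M)"
      using card_Diff1_less[OF finite ij] by simp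
    obtain xs where xs: "M' = mat_prod_list xs" "length xs \<le> card (offdiag_support M')"
        "set xs \<subseteq> transvections"
      using less.hyps[OF smaller tri'] by blast
    have "M $ a $ b = (transvection i j (M $ i $ j) ** M') $ a $ b" for a b
      using row_j \<open>i \<noteq> j\<close> by (simp add: transvection_mult_nth M'_def)
    then have "M = transvection i j (M $ i $ j) ** M'"
      unfolding vec_eq_iff by blast
    then show ?thesis
      using xs smaller \<open>i \<noteq> j\<close>
      by (intro exI[of _ "transvection i j (M $ i $ j) # xs"]) (auto simp: transvections_def)
  qed
qed

locale homogeneous_quasi_hom_EL =
  fixes \<phi> :: "'a::ring_1^'n::{finite,linorder}^'n::{finite,linorder} \<Rightarrow> real" and C :: real
  assumes defect: "\<And>g h. g \<in> EL \<Longrightarrow> h \<in> EL \<Longrightarrow> \<bar>\<phi> (g ** h) - \<phi> g - \<phi> h\<bar> \<le> C"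
    and homogeneous: "homogeneous_EL \<phi>"
begin

lemma npow:
  assumes "g \<in> EL"
  shows "\<phi> (mat_npow g m) = real m * \<phi> g"
proof -
  have "\<phi> (mat_ipow g (int m)) = of_int (int m) * \<phi> g"
    using homogeneous assms unfolding homogeneous_EL_def by blast
  then show ?thesis by (simp add: mat_ipow_def)
qed

lemma one: "\<phi> (mat 1) = 0"
  using npow[OF EL_one, of 0] by simp

lemma defect_nonneg: "0 \<le> C"
  using defect[OF EL_one EL_one] one by simp

lemma inverse:
  assumes "g \<in> EL" "g ** h = mat 1" "h ** g = mat 1"
  shows "\<phi> h = - \<phi> g"
proof -
  have "mat_ipow g (-1) = h"
    using assms(2,3) by (simp add: mat_ipow_def mat_inv2_eqI)
  moreover have "\<phi> (mat_ipow g (-1)) = of_int (-1) * \<phi> g"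
    using homogeneous assms(1) unfolding homogeneous_EL_def by blast
  ultimately show ?thesis by simp
qed

lemma prod_list:
  "set xs \<subseteq> EL \<Longrightarrow> \<bar>\<phi> (mat_prod_list xs) - (\<Sum>x\<leftarrow>xs. \<phi> x)\<bar> \<le> real (length xs) * C"
proof (induction xs)
  case Nil
  then show ?case by (simp add: one)
next
  case (Cons x xs)
  then have "\<bar>\<phi> (x ** mat_prod_list xs) - \<phi> x - \<phi> (mat_prod_list xs)\<bar> \<le> C"
    by (simp add: defect mat_prod_list_in_EL)
  with Cons show ?case by (simp add: algebra_simps)
qed

lemma eq_0_if_bounded_on_powers:
  assumes "g \<in> EL" and bounded: "\<And>m. \<bar>\<phi> (mat_npow g m)\<bar> \<le> D"
  shows "\<phi> g = 0"
proof (rule ccontr)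
  assume "\<phi> g \<noteq> 0"
  obtain m :: nat where "D / \<bar>\<phi> g\<bar> < real m"
    using reals_Archimedean2 by blast
  with \<open>\<phi> g \<noteq> 0\<close> have "D < real m * \<bar>\<phi> g\<bar>"
    by (simp add: field_simps)
  with bounded[of m] show False
    by (simp add: npow[OF \<open>g \<in> EL\<close>] abs_mult)
qed

lemma transvection_uminus: "i \<noteq> j \<Longrightarrow> \<phi> (transvection i j (- x)) = - \<phi> (transvection i j x)"
  by (rule inverse[OF transvection_in_EL]) (simp_all add: transvection_add transvection_zero)

lemma transvection_eq_0:
  assumes "CARD('n) \<ge> 3" "i \<noteq> j"
  shows "\<phi> (transvection i j b) = 0"
proof -
  have "card {i, j} \<le> 2"
    by (simp add: card_insert_le_m1)
  with assms(1) have "{i, j} \<noteq> UNIV" by auto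
  then obtain k where k: "k \<noteq> i" "k \<noteq> j" by blast
  have "\<bar>\<phi> (mat_npow (transvection i j b) m)\<bar> \<le> 4 * C" for m
  proof -
    define x where "x = of_nat m * b"
    let ?xs = "[transvection i k x, transvection k j 1, transvection i k (- x), transvection k j (- 1)]"
    have "mat_npow (transvection i j b) m = mat_prod_list ?xs"
      using transvection_commutator[of i j k x 1] assms(2) k by (simp add: mat_npow_transvection x_def)
    moreover have "set ?xs \<subseteq> EL"
      using assms(2) k by (simp add: transvection_in_EL)
    moreover have "(\<Sum>y\<leftarrow>?xs. \<phi> y) = 0"
      using k by (simp add: transvection_uminus)
    ultimately show ?thesis
      using prod_list[of ?xs] by simp
  qed
  then show ?thesis
    by (rule eq_0_if_bounded_on_powers[OF transvection_in_EL[OF assms(2)]])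
qed

lemma prod_transvections:
  assumes "CARD('n) \<ge> 3" "set xs \<subseteq> transvections"
  shows "\<bar>\<phi> (mat_prod_list xs)\<bar> \<le> real (length xs) * C"
proof -
  have "(\<Sum>x\<leftarrow>xs. \<phi> x) = (\<Sum>x\<leftarrow>xs. 0)"
    using assms by (intro arg_cong[where f = sum_list] map_cong)
      (auto simp: transvections_def transvection_eq_0)
  with prod_list[OF subset_trans[OF assms(2) transvections_subset_EL]] show ?thesis
    by simp
qed

lemma unitriangular_eq_0:
  assumes "CARD('n) \<ge> 3" "h \<in> EL" "transp R" "irreflp R" "unitriangular R h"
  shows "\<phi> h = 0"
proof (rule eq_0_if_bounded_on_powers[OF assms(2), where D = "real CARD('n \<times> 'n) * C"])
  fix m
  obtain xs where xs: "mat_npow h m = mat_prod_list xs"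
      "length xs \<le> card (offdiag_support (mat_npow h m))" "set xs \<subseteq> transvections"
    using unitriangular_transvection_factorization[OF assms(3,4) unitriangular_npow[OF assms(3-5), of m]]
    by blast
  have "card (offdiag_support (mat_npow h m)) \<le> CARD('n \<times> 'n)"
    by (rule card_mono) simp_all
  with xs(2) have "length xs \<le> CARD('n \<times> 'n)"
    by (rule le_trans)
  then have "real (length xs) * C \<le> real CARD('n \<times> 'n) * C"
    by (intro mult_right_mono defect_nonneg of_nat_mono)
  with prod_transvections[OF assms(1) xs(3)] xs(1)
  show "\<bar>\<phi> (mat_npow h m)\<bar> \<le> real CARD('n \<times> 'n) * C"
    by simp
qed

end

theorem lemma2p5:
  fixes \<phi> :: "'a::ring_1 ^('n::{finite,linorder}) ^'n::{finite,linorder} \<Rightarrow> real"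
  assumes "CARD('n) \<ge> 3"
    and "quasi_hom_on EL (**) \<phi>"
    and "homogeneous_EL \<phi>"
  shows "(\<forall>s. elementary_mat s \<longrightarrow> \<phi> s = 0) \<and>
         (\<forall>h \<in> upper_unitri \<union> lower_unitri. \<phi> h = 0)"
proof -
  obtain C where "\<And>g h. g \<in> EL \<Longrightarrow> h \<in> EL \<Longrightarrow> \<bar>\<phi> (g ** h) - \<phi> g - \<phi> h\<bar> \<le> C"
    using assms(2) unfolding quasi_hom_on_def by blast
  then interpret homogeneous_quasi_hom_EL \<phi> C
    using assms(3) by unfold_locales
  have "\<phi> s = 0" if "elementary_mat s" for s
    using that by (cases rule: elementary_mat_cases) (simp_all add: one transvection_eq_0[OF assms(1)])
  moreover have "\<phi> h = 0" if "h \<in> upper_unitri \<union> lower_unitri" for h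
  proof -
    from that have "h \<in> EL"
      by (auto simp: upper_unitri_def lower_unitri_def)
    moreover from that have "unitriangular (<) h \<or> unitriangular (>) h"
      using upper_unitri_unitriangular lower_unitri_unitriangular by blast
    ultimately show ?thesis
      using unitriangular_eq_0[OF assms(1) _ transp_on_less irreflp_on_less]
        unitriangular_eq_0[OF assms(1) _ transp_on_greater irreflp_on_greater] by blast
  qed
  ultimately show ?thesis by blast
qed

end
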